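(* Consider the packet spreading algorithm described in the context with any $N\ge 2$ and positive integers $K_1,\dots,K_N$. Then for every $n\in\{1,\dots,N\}$: $x_n^{K-1}=K_n$ (the output pattern of length $K$ contains exactly $K_n$ occurrences of source $n$), $\tilde Q_n^K=\frac{1}{K_n}$, and consequently $B_n^K=0$.
   Context: Packet spreading algorithm: Let $N\ge 2$, let $K_1,\dots,K_N$ be positive integers and $K=\sum_{n=1}^N K_n$. The algorithm runs iterations $k=0,1,\dots,K-1$ and maintains deficit counters $B_n^k$, $1\le n\le N$, with $B_n^0=0$ for all $n$. In iteration $k$, define the quantums $Q_n^k=\frac{(1-B_n^k)K}{K_n}$; select a source $m_k\in\arg\min_{1\le n\le N} Q_n^k$ (ties broken arbitrarily); let $Q=Q_{m_k}^k$; set $B_n^{k+1}=B_n^k+Q\frac{K_n}{K}$ for $n\neq m_k$ and $B_{m_k}^{k+1}=0$; and set the $k$-th entry of the output pattern to $P(k)=m_k$. (Thus $B_n^{K}$ is defined after the last iteration.) Normalized quantums: $\tilde Q_n^k=Q_n^k/K=(1-B_n^k)/K_n$. For $0\le k\le K-1$, $x_n^k$ denotes the number of indices $k'\in\{0,\dots,k\}$ with $m_{k'}=n$. *)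

theory Defs
  imports Main "HOL.Real"
begin

definition total_K :: "nat \<Rightarrow> (nat \<Rightarrow> nat) \<Rightarrow> nat" where
  "total_K N Kn = (\<Sum>n = 1..N. Kn n)"

definition quantum :: "nat \<Rightarrow> (nat \<Rightarrow> nat) \<Rightarrow> (nat \<Rightarrow> nat \<Rightarrow> real) \<Rightarrow> nat \<Rightarrow> nat \<Rightarrow> real" where
  "quantum N Kn B k n = (1 - B k n) * real (total_K N Kn) / real (Kn n)"

text \<open>A run of the packet spreading algorithm with arbitrary tie-breaking:
  m k is the selected source m_k (output P(k)), B k n the counter B_n^k.\<close>
definition packet_run :: "nat \<Rightarrow> (nat \<Rightarrow> nat) \<Rightarrow> (nat \<Rightarrow> nat) \<Rightarrow> (nat \<Rightarrow> nat \<Rightarrow> real) \<Rightarrow> bool" where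
  "packet_run N Kn m B \<longleftrightarrow>
     (\<forall>n\<in>{1..N}. B 0 n = 0) \<and>
     (\<forall>k < total_K N Kn.
        m k \<in> {1..N} \<and>
        (\<forall>n\<in>{1..N}. quantum N Kn B k (m k) \<le> quantum N Kn B k n) \<and>
        (\<forall>n\<in>{1..N}. B (Suc k) n =
            (if n = m k then 0
             else B k n + quantum N Kn B k (m k) * real (Kn n) / real (total_K N Kn))))"

definition count_sel :: "(nat \<Rightarrow> nat) \<Rightarrow> nat \<Rightarrow> nat \<Rightarrow> nat" where
  "count_sel m n k = card {k'. k' \<le> k \<and> m k' = n}"

end

theory Submission
  imports Defs
begin

text \<open>With weights \<open>w\<^sub>n = K\<^sub>n / K\<close>, cumulative quantum \<open>T\<^sub>k\<close> (the sum of the quanta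
  chosen before iteration \<open>k\<close>) and selection counts \<open>c\<^sub>k(n)\<close>, every counter satisfies
  \<open>B\<^sub>n\<^sup>k = w\<^sub>n T\<^sub>k - c\<^sub>k(n)\<close>, and the minimum rule keeps \<open>0 \<le> B\<^sub>n\<^sup>k \<le> 1\<close>.
  If \<open>T\<close> ever exceeded \<open>K\<close>, every source would have been selected at least \<open>K\<^sub>n\<close> times and
  the last selected one more often, i.e. more than \<open>K\<close> selections in total.
  Hence \<open>T\<^sub>K \<le> K\<close>, while summing the invariant gives \<open>\<Sum>\<^sub>n B\<^sub>n\<^sup>K = T\<^sub>K - K\<close>;
  as all counters are nonnegative they all vanish, and then \<open>c\<^sub>K(n) = w\<^sub>n K = K\<^sub>n\<close>.\<close>

definition sel_count :: "(nat \<Rightarrow> nat) \<Rightarrow> nat \<Rightarrow> nat \<Rightarrow> nat" where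
  "sel_count m k n = card {k'. k' < k \<and> m k' = n}"

lemma sel_count_0 [simp]: "sel_count m 0 n = 0"
  by (simp add: sel_count_def)

lemma sel_count_Suc:
  "sel_count m (Suc k) n = sel_count m k n + (if m k = n then 1 else 0)"
proof -
  have "{k'. k' < Suc k \<and> m k' = n} =
        (if m k = n then insert k else id) {k'. k' < k \<and> m k' = n}"
    by (auto simp: less_Suc_eq)
  then show ?thesis
    by (simp add: sel_count_def)
qed

lemma count_sel_eq_sel_count: "count_sel m n k = sel_count m (Suc k) n"
  by (simp add: count_sel_def sel_count_def less_Suc_eq_le)

lemma sum_sel_count:
  assumes "finite A" and "\<forall>k' < k. m k' \<in> A"
  shows "(\<Sum>n\<in>A. sel_count m k n) = k"
  using assms(2)
proof (induction k)
  case 0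
  then show ?case by simp
next
  case (Suc k)
  then have "m k \<in> A" by simp
  then show ?case
    using Suc \<open>finite A\<close> by (simp add: sel_count_Suc sum.distrib)
qed

locale packet_spreading =
  fixes N :: nat and Kn :: "nat \<Rightarrow> nat" and m :: "nat \<Rightarrow> nat" and B :: "nat \<Rightarrow> nat \<Rightarrow> real"
  assumes Kn_pos: "\<forall>n\<in>{1..N}. Kn n > 0"
    and run: "packet_run N Kn m B"
begin

abbreviation K :: nat where "K \<equiv> total_K N Kn"

definition weight :: "nat \<Rightarrow> real" where
  "weight n = real (Kn n) / real K"

definition quantum_sum :: "nat \<Rightarrow> real" where
  "quantum_sum k = (\<Sum>j<k. quantum N Kn B j (m j))"

lemma B_0: "n \<in> {1..N} \<Longrightarrow> B 0 n = 0"
  using run by (simp add: packet_run_def)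

lemma selected_in_range: "k < K \<Longrightarrow> m k \<in> {1..N}"
  using run by (simp add: packet_run_def)

lemma selected_quantum_le: "k < K \<Longrightarrow> n \<in> {1..N} \<Longrightarrow> quantum N Kn B k (m k) \<le> quantum N Kn B k n"
  using run by (simp add: packet_run_def)

lemma B_Suc:
  "k < K \<Longrightarrow> n \<in> {1..N} \<Longrightarrow>
     B (Suc k) n = (if n = m k then 0 else B k n + weight n * quantum N Kn B k (m k))"
  using run by (simp add: packet_run_def weight_def)

lemma Kn_le_K: "n \<in> {1..N} \<Longrightarrow> Kn n \<le> K"
  unfolding total_K_def by (rule member_le_sum) auto

lemma K_pos: "n \<in> {1..N} \<Longrightarrow> 0 < K"
  using Kn_le_K Kn_pos by (meson less_le_trans)

lemma weight_mult_quantum: "n \<in> {1..N} \<Longrightarrow> weight n * quantum N Kn B k n = 1 - B k n"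
  using K_pos[of n] Kn_pos by (simp add: weight_def quantum_def)

lemma sum_weight:
  assumes "1 \<le> N"
  shows "(\<Sum>n = 1..N. weight n) = 1"
proof -
  have "(\<Sum>n = 1..N. real (Kn n)) = real K"
    by (simp add: total_K_def)
  then show ?thesis
    using K_pos[of 1] assms by (simp add: weight_def flip: sum_divide_distrib)
qed

lemma deficit_bounds: "k \<le> K \<Longrightarrow> n \<in> {1..N} \<Longrightarrow> 0 \<le> B k n \<and> B k n \<le> 1"
proof (induction k arbitrary: n)
  case 0
  then show ?case by (simp add: B_0)
next
  case (Suc k)
  let ?Q = "quantum N Kn B k (m k)"
  have k: "k < K" using Suc.prems by simp
  have mk: "m k \<in> {1..N}" using selected_in_range[OF k] .
  have "?Q \<ge> 0"
    using Suc.IH[OF _ mk] k by (simp add: quantum_def)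
  moreover have "weight n * ?Q \<le> 1 - B k n"
    using selected_quantum_le[OF k Suc.prems(2)] weight_mult_quantum[OF Suc.prems(2)]
    by (metis mult_left_mono of_nat_0_le_iff weight_def divide_nonneg_nonneg)
  ultimately show ?case
    using B_Suc[OF k Suc.prems(2)] Suc.IH[OF _ Suc.prems(2)] k
    by (simp add: weight_def)
qed

lemma deficit_eq:
  "k \<le> K \<Longrightarrow> n \<in> {1..N} \<Longrightarrow> B k n = weight n * quantum_sum k - real (sel_count m k n)"
proof (induction k)
  case 0
  then show ?case by (simp add: B_0 quantum_sum_def)
next
  case (Suc k)
  then have k: "k < K" by simp
  have "quantum_sum (Suc k) = quantum_sum k + quantum N Kn B k (m k)"
    by (simp add: quantum_sum_def)
  then show ?case
    using Suc B_Suc[OF k Suc.prems(2)] weight_mult_quantum[OF Suc.prems(2), of k]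
    by (auto simp: sel_count_Suc algebra_simps)
qed

lemma sum_deficit:
  assumes "1 \<le> N" and "k \<le> K"
  shows "(\<Sum>n = 1..N. B k n) = quantum_sum k - real k"
proof -
  have "(\<Sum>n = 1..N. B k n) = (\<Sum>n = 1..N. weight n * quantum_sum k - real (sel_count m k n))"
    using deficit_eq assms(2) by simp
  also have "\<dots> = quantum_sum k * (\<Sum>n = 1..N. weight n) - real (\<Sum>n = 1..N. sel_count m k n)"
    by (simp add: sum_subtractf sum_distrib_left mult.commute)
  also have "\<dots> = quantum_sum k - real k"
    using sum_weight[OF assms(1)] sum_sel_count[of "{1..N}" k m] selected_in_range assms(2)
    by simp
  finally show ?thesis .
qed

lemma quantum_sum_le_K: "k \<le> K \<Longrightarrow> quantum_sum k \<le> real K"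
proof (cases k)
  case 0
  then show ?thesis by (simp add: quantum_sum_def)
next
  case (Suc j)
  assume kK: "k \<le> K"
  show ?thesis
  proof (rule ccontr)
    assume "\<not> quantum_sum k \<le> real K"
    then have exceeds: "weight n * quantum_sum k > real (Kn n)" if "n \<in> {1..N}" for n
      using that Kn_pos K_pos[OF that] by (simp add: weight_def field_simps)
    have j: "j < K" and mj: "m j \<in> {1..N}"
      using Suc kK selected_in_range by auto
    have "Kn n \<le> sel_count m k n" if n: "n \<in> {1..N}" for n
      using deficit_eq[OF kK n] deficit_bounds[OF kK n] exceeds[OF n] by linarith
    moreover have "Kn (m j) < sel_count m k (m j)"
      using deficit_eq[OF kK mj] B_Suc[OF j mj] exceeds[OF mj] Suc by simp
    ultimately have "(\<Sum>n = 1..N. Kn n) < (\<Sum>n = 1..N. sel_count m k n)"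
      using mj by (intro sum_strict_mono_ex1) auto
    also have "\<dots> = k"
      using sum_sel_count[of "{1..N}" k m] selected_in_range kK by simp
    finally show False
      using kK by (simp add: total_K_def)
  qed
qed

lemma final_state:
  assumes n: "n \<in> {1..N}"
  shows "B K n = 0" and "sel_count m K n = Kn n"
proof -
  have N: "1 \<le> N" using n by simp
  have nonneg: "\<forall>i\<in>{1..N}. 0 \<le> B K i"
    using deficit_bounds by simp
  have "(\<Sum>i = 1..N. B K i) \<le> 0"
    using sum_deficit[OF N] quantum_sum_le_K by simp
  then have sum_zero: "(\<Sum>i = 1..N. B K i) = 0"
    using sum_nonneg nonneg by (metis order_antisym)
  with nonneg show B_K: "B K n = 0"
    using n sum_nonneg_eq_0_iff[of "{1..N}" "B K"] by simp
  have "quantum_sum K = real K"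
    using sum_deficit[OF N] sum_zero by simp
  then show "sel_count m K n = Kn n"
    using deficit_eq[OF _ n, of K] B_K K_pos[OF n] by (simp add: weight_def)
qed

end

theorem mainTheorem5:
  fixes N :: nat and Kn :: "nat \<Rightarrow> nat" and m :: "nat \<Rightarrow> nat" and B :: "nat \<Rightarrow> nat \<Rightarrow> real"
  assumes "N \<ge> 2"
    and "\<forall>n\<in>{1..N}. Kn n > 0"
    and "packet_run N Kn m B"
  shows "\<forall>n\<in>{1..N}.
           count_sel m n (total_K N Kn - 1) = Kn n \<and>
           quantum N Kn B (total_K N Kn) n / real (total_K N Kn) = 1 / real (Kn n) \<and>
           B (total_K N Kn) n = 0"
proof
  fix n assume n: "n \<in> {1..N}"
  interpret packet_spreading N Kn m B
    using assms(2,3) by unfold_locales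
  have "0 < K" using K_pos[OF n] .
  then have "count_sel m n (K - 1) = sel_count m K n"
    by (simp add: count_sel_eq_sel_count)
  then show "count_sel m n (K - 1) = Kn n \<and> quantum N Kn B K n / real K = 1 / real (Kn n) \<and> B K n = 0"
    using final_state[OF n] \<open>0 < K\<close> by (simp add: quantum_def)
qed

end
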